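(* Let $d\ge 3$ and let $P$ be a finite set of points in $\mathbb{R}^d$. Let $C$ be the set of centers of all smallest axis-aligned hypercubes enclosing $P$. Then there exists a minimum-width hypercubic shell enclosing $P$ whose center lies in $C$.
   Context: The $L_\infty$ norm is $\|p\|=\max_i|x_i(p)|$; $\mathbf{B}(c,r)=\{q:\|q-c\|\le r\}$ is the axis-aligned hypercube with center $c$ and radius $r$. A smallest enclosing hypercube of $P$ is one of minimum radius containing $P$. A hypercubic shell with center $c$ is $\mathbf{B}(c,r)\setminus\operatorname{int}\mathbf{B}(c,r')$ with $r\ge r'\ge0$, of width $r-r'$; it encloses $P$ if it contains $P$. A minimum-width hypercubic shell enclosing $P$ is one of smallest width among all hypercubic shells enclosing $P$. *)

theory Defs
  imports "HOL-Analysis.Analysis"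
begin

definition hcube :: "real^'n \<Rightarrow> real \<Rightarrow> (real^'n) set" where
  "hcube c r = {q. infnorm (q - c) \<le> r}"

definition smallest_enclosing_hcube :: "(real^'n) set \<Rightarrow> real^'n \<Rightarrow> real \<Rightarrow> bool" where
  "smallest_enclosing_hcube P c r \<longleftrightarrow>
     0 \<le> r \<and> P \<subseteq> hcube c r \<and>
     (\<forall>c' r'. 0 \<le> r' \<and> P \<subseteq> hcube c' r' \<longrightarrow> r \<le> r')"

definition seh_centers :: "(real^'n) set \<Rightarrow> (real^'n) set" where
  "seh_centers P = {c. \<exists>r. smallest_enclosing_hcube P c r}"

definition hshell :: "real^'n \<Rightarrow> real \<Rightarrow> real \<Rightarrow> (real^'n) set" where
  "hshell c r r' = hcube c r - interior (hcube c r')"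

definition min_width_shell :: "(real^'n) set \<Rightarrow> real^'n \<Rightarrow> real \<Rightarrow> real \<Rightarrow> bool" where
  "min_width_shell P c r r' \<longleftrightarrow>
     0 \<le> r' \<and> r' \<le> r \<and> P \<subseteq> hshell c r r' \<and>
     (\<forall>c2 s s'. 0 \<le> s' \<and> s' \<le> s \<and> P \<subseteq> hshell c2 s s' \<longrightarrow> r - r' \<le> s - s')"

end

theory Submission
  imports Defs
begin

text \<open>
  For a centre c let F(c) and G(c) be the largest and smallest L\<infinity>-distance from c to P; the
  thinnest shell around P centred at c has width F(c) - G(c), and both F and G are 1-Lipschitz.
  Writing R for half the largest coordinate extent of P, F \<ge> R everywhere, and F = R exactly on
  a box of centres, all of them centres of smallest enclosing cubes. Clamping an arbitrary centre
  c coordinatewise into this box moves it by at most F(c) - R, so F drops by at least the distance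
  moved while G drops by at most that distance: the width does not increase. Hence the width,
  a continuous function, attains its global minimum on the compact box.
\<close>

lemma infnorm_cart_Max: "infnorm (x::real^'n) = (MAX i. \<bar>x$i\<bar>)"
  unfolding infnorm_cart by (subst cSup_eq_Max) (auto simp: full_SetCompr_eq)

lemma infnorm_le_iff_cart: "infnorm (x::real^'n) \<le> B \<longleftrightarrow> (\<forall>i. \<bar>x$i\<bar> \<le> B)"
  by (simp add: infnorm_cart_Max)

lemma infnorm_less_iff_cart: "infnorm (x::real^'n) < B \<longleftrightarrow> (\<forall>i. \<bar>x$i\<bar> < B)"
  by (simp add: infnorm_cart_Max)

lemma hcube_eq_cbox: "hcube c r = cbox (c - vec r) (c + vec r)"
  by (rule set_eqI)
    (simp add: hcube_def infnorm_le_iff_cart mem_box_cart abs_le_iff all_conj_distrib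
      algebra_simps conj_commute)

lemma interior_hcube: "interior (hcube c r) = {q. infnorm (q - c) < r}"
  by (rule set_eqI)
    (simp add: hcube_eq_cbox infnorm_less_iff_cart mem_box_cart abs_less_iff all_conj_distrib
      algebra_simps conj_commute)

lemma mem_hshell_iff: "p \<in> hshell c r r' \<longleftrightarrow> r' \<le> infnorm (p - c) \<and> infnorm (p - c) \<le> r"
  unfolding hshell_def interior_hcube by (auto simp: hcube_def)

definition outer_radius :: "'a::euclidean_space set \<Rightarrow> 'a \<Rightarrow> real" where
  "outer_radius P c = Max ((\<lambda>p. infnorm (p - c)) ` P)"

definition inner_radius :: "'a::euclidean_space set \<Rightarrow> 'a \<Rightarrow> real" where
  "inner_radius P c = Min ((\<lambda>p. infnorm (p - c)) ` P)"

definition shell_width :: "'a::euclidean_space set \<Rightarrow> 'a \<Rightarrow> real" where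
  "shell_width P c = outer_radius P c - inner_radius P c"

lemma outer_radius_ge: "finite P \<Longrightarrow> p \<in> P \<Longrightarrow> infnorm (p - c) \<le> outer_radius P c"
  unfolding outer_radius_def by (rule Max_ge) auto

lemma outer_radius_le_iff:
  "finite P \<Longrightarrow> P \<noteq> {} \<Longrightarrow> outer_radius P c \<le> B \<longleftrightarrow> (\<forall>p\<in>P. infnorm (p - c) \<le> B)"
  unfolding outer_radius_def by simp

lemma inner_radius_le: "finite P \<Longrightarrow> p \<in> P \<Longrightarrow> inner_radius P c \<le> infnorm (p - c)"
  unfolding inner_radius_def by (rule Min_le) auto

lemma le_inner_radius_iff:
  "finite P \<Longrightarrow> P \<noteq> {} \<Longrightarrow> B \<le> inner_radius P c \<longleftrightarrow> (\<forall>p\<in>P. B \<le> infnorm (p - c))"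
  unfolding inner_radius_def by simp

lemma inner_radius_attained:
  assumes "finite P" "P \<noteq> {}"
  obtains p where "p \<in> P" "inner_radius P c = infnorm (p - c)"
proof -
  have "inner_radius P c \<in> (\<lambda>p. infnorm (p - c)) ` P"
    unfolding inner_radius_def using assms by (intro Min_in) auto
  then show ?thesis using that by blast
qed

lemma outer_radius_lipschitz:
  assumes "finite P" "P \<noteq> {}"
  shows "outer_radius P c \<le> outer_radius P d + infnorm (c - d)"
  unfolding outer_radius_le_iff[OF assms]
proof
  fix p assume "p \<in> P"
  have "infnorm (p - c) \<le> infnorm (p - d) + infnorm (d - c)"
    using infnorm_triangle[of "p - d" "d - c"] by simp
  then show "infnorm (p - c) \<le> outer_radius P d + infnorm (c - d)"
    using outer_radius_ge[OF assms(1) \<open>p \<in> P\<close>, of d] infnorm_sub[of d c] by linarith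
qed

lemma inner_radius_lipschitz:
  assumes "finite P" "P \<noteq> {}"
  shows "inner_radius P d \<le> inner_radius P c + infnorm (c - d)"
proof -
  obtain p where "p \<in> P" and p: "inner_radius P c = infnorm (p - c)"
    using inner_radius_attained[OF assms] .
  have "inner_radius P d \<le> infnorm (p - d)"
    using inner_radius_le[OF assms(1) \<open>p \<in> P\<close>] .
  also have "\<dots> \<le> infnorm (p - c) + infnorm (c - d)"
    using infnorm_triangle[of "p - c" "c - d"] by simp
  finally show ?thesis using p by simp
qed

lemma continuous_on_shell_width:
  assumes "finite P" "P \<noteq> {}"
  shows "continuous_on S (shell_width P)"
proof (rule lipschitz_on_continuous_on[where L = 2], rule lipschitz_onI)
  fix c d :: 'a
  have "\<bar>shell_width P c - shell_width P d\<bar> \<le> 2 * infnorm (c - d)"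
    using outer_radius_lipschitz[OF assms, of c d] outer_radius_lipschitz[OF assms, of d c]
      inner_radius_lipschitz[OF assms, of c d] inner_radius_lipschitz[OF assms, of d c]
      infnorm_sub[of c d]
    unfolding shell_width_def by linarith
  then show "dist (shell_width P c) (shell_width P d) \<le> 2 * dist c d"
    using infnorm_le_norm[of "c - d"] unfolding dist_real_def dist_norm by linarith
qed simp

lemma subset_hcube_iff:
  "finite P \<Longrightarrow> P \<noteq> {} \<Longrightarrow> P \<subseteq> hcube c r \<longleftrightarrow> outer_radius P c \<le> r"
  unfolding outer_radius_le_iff hcube_def by blast

lemma subset_hshell_iff:
  "finite P \<Longrightarrow> P \<noteq> {} \<Longrightarrow>
    P \<subseteq> hshell c r r' \<longleftrightarrow> r' \<le> inner_radius P c \<and> outer_radius P c \<le> r"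
  unfolding outer_radius_le_iff le_inner_radius_iff subset_iff mem_hshell_iff by blast

lemma shell_width_le:
  assumes "finite P" "P \<noteq> {}" "P \<subseteq> hshell c r r'"
  shows "shell_width P c \<le> r - r'"
  using assms(3) unfolding subset_hshell_iff[OF assms(1,2)] shell_width_def by linarith

lemma min_width_shell_radii:
  assumes "finite P" "P \<noteq> {}" "\<And>c. shell_width P c0 \<le> shell_width P c"
  shows "min_width_shell P c0 (outer_radius P c0) (inner_radius P c0)"
  unfolding min_width_shell_def
proof (intro conjI allI impI)
  obtain p where "p \<in> P" using assms(2) by blast
  then show "inner_radius P c0 \<le> outer_radius P c0"
    using inner_radius_le[OF assms(1), of p c0] outer_radius_ge[OF assms(1), of p c0] by linarith
  show "0 \<le> inner_radius P c0"
    by (simp add: le_inner_radius_iff[OF assms(1,2)] infnorm_pos_le)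
  show "P \<subseteq> hshell c0 (outer_radius P c0) (inner_radius P c0)"
    using subset_hshell_iff[OF assms(1,2)] by simp
  fix c s s' assume "0 \<le> s' \<and> s' \<le> s \<and> P \<subseteq> hshell c s s'"
  then have "shell_width P c \<le> s - s'" using shell_width_le[OF assms(1,2)] by blast
  then show "outer_radius P c0 - inner_radius P c0 \<le> s - s'"
    using assms(3)[of c] unfolding shell_width_def by linarith
qed

definition coord_min :: "(real^'n) set \<Rightarrow> 'n \<Rightarrow> real" where
  "coord_min P i = Min ((\<lambda>p. p$i) ` P)"

definition coord_max :: "(real^'n) set \<Rightarrow> 'n \<Rightarrow> real" where
  "coord_max P i = Max ((\<lambda>p. p$i) ` P)"

definition cube_radius :: "(real^'n) set \<Rightarrow> real" where
  "cube_radius P = (MAX i. coord_max P i - coord_min P i) / 2"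

definition center_box :: "(real^'n) set \<Rightarrow> (real^'n) set" where
  "center_box P = cbox (\<chi> i. coord_max P i - cube_radius P) (\<chi> i. coord_min P i + cube_radius P)"

lemma coord_min_le: "finite P \<Longrightarrow> p \<in> P \<Longrightarrow> coord_min P i \<le> p$i"
  unfolding coord_min_def by (rule Min_le) auto

lemma coord_max_ge: "finite P \<Longrightarrow> p \<in> P \<Longrightarrow> p$i \<le> coord_max P i"
  unfolding coord_max_def by (rule Max_ge) auto

lemma coord_min_attained:
  assumes "finite P" "P \<noteq> {}"
  obtains p where "p \<in> P" "p$i = coord_min P i"
proof -
  have "coord_min P i \<in> (\<lambda>p. p$i) ` P"
    unfolding coord_min_def using assms by (intro Min_in) auto
  then show ?thesis using that by force
qed

lemma coord_max_attained:
  assumes "finite P" "P \<noteq> {}"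
  obtains p where "p \<in> P" "p$i = coord_max P i"
proof -
  have "coord_max P i \<in> (\<lambda>p. p$i) ` P"
    unfolding coord_max_def using assms by (intro Max_in) auto
  then show ?thesis using that by force
qed

lemma coord_extent_le_cube_radius: "coord_max P i - coord_min P i \<le> 2 * cube_radius P"
  unfolding cube_radius_def by (simp add: Max_ge)

lemma cube_radius_nonneg:
  assumes "finite P" "P \<noteq> {}"
  shows "0 \<le> cube_radius P"
proof -
  obtain p where "p \<in> P" using assms(2) by blast
  then have "coord_min P i \<le> coord_max P i" for i
    using coord_min_le[OF assms(1)] coord_max_ge[OF assms(1)] order_trans by blast
  from this[of undefined] show ?thesis
    using coord_extent_le_cube_radius[of P undefined] by linarith
qed

lemma coord_bounds_outer_radius:
  assumes "finite P" "P \<noteq> {}"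
  shows "c$i - coord_min P i \<le> outer_radius P c" "coord_max P i - c$i \<le> outer_radius P c"
proof -
  obtain p where "p \<in> P" "p$i = coord_min P i" using coord_min_attained[OF assms] .
  then show "c$i - coord_min P i \<le> outer_radius P c"
    using component_le_infnorm_cart[of "p - c" i] outer_radius_ge[OF assms(1), of p c] by simp
  obtain q where "q \<in> P" "q$i = coord_max P i" using coord_max_attained[OF assms] .
  then show "coord_max P i - c$i \<le> outer_radius P c"
    using component_le_infnorm_cart[of "q - c" i] outer_radius_ge[OF assms(1), of q c] by simp
qed

lemma cube_radius_le_outer_radius:
  assumes "finite P" "P \<noteq> {}"
  shows "cube_radius P \<le> outer_radius P c"
proof -
  have "(MAX i. coord_max P i - coord_min P i) \<in> range (\<lambda>i. coord_max P i - coord_min P i)"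
    by (intro Max_in) auto
  then obtain i where "cube_radius P = (coord_max P i - coord_min P i) / 2"
    unfolding cube_radius_def by (metis (no_types, lifting) rangeE)
  moreover have "coord_max P i - coord_min P i \<le> 2 * outer_radius P c"
    using coord_bounds_outer_radius[OF assms, where c = c and i = i] by linarith
  ultimately show ?thesis by simp
qed

lemma outer_radius_center_box:
  assumes "finite P" "P \<noteq> {}" "c \<in> center_box P"
  shows "outer_radius P c = cube_radius P"
proof (rule antisym)
  show "outer_radius P c \<le> cube_radius P"
    unfolding outer_radius_le_iff[OF assms(1,2)] infnorm_le_iff_cart
  proof (intro ballI allI)
    fix p i assume "p \<in> P"
    have "coord_max P i - cube_radius P \<le> c$i" "c$i \<le> coord_min P i + cube_radius P"
      using assms(3) by (auto simp: center_box_def mem_box_cart)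
    then show "\<bar>(p - c)$i\<bar> \<le> cube_radius P"
      using coord_min_le[OF assms(1) \<open>p \<in> P\<close>, of i] coord_max_ge[OF assms(1) \<open>p \<in> P\<close>, of i]
      by simp
  qed
  show "cube_radius P \<le> outer_radius P c"
    using cube_radius_le_outer_radius[OF assms(1,2)] .
qed

lemma smallest_enclosing_hcube_center_box:
  assumes "finite P" "P \<noteq> {}" "c \<in> center_box P"
  shows "smallest_enclosing_hcube P c (cube_radius P)"
proof -
  have "P \<subseteq> hcube c (cube_radius P)"
    using outer_radius_center_box[OF assms] subset_hcube_iff[OF assms(1,2)] by simp
  moreover have "cube_radius P \<le> r'" if "P \<subseteq> hcube c' r'" for c' r'
    using that cube_radius_le_outer_radius[OF assms(1,2), of c'] subset_hcube_iff[OF assms(1,2)]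
    by force
  ultimately show ?thesis
    using cube_radius_nonneg[OF assms(1,2)] by (auto simp: smallest_enclosing_hcube_def)
qed

lemma center_box_near:
  assumes "finite P" "P \<noteq> {}"
  obtains c' where "c' \<in> center_box P" "infnorm (c - c') \<le> outer_radius P c - cube_radius P"
proof
  define lo where "lo i = coord_max P i - cube_radius P" for i
  define hi where "hi i = coord_min P i + cube_radius P" for i
  have lo_hi: "lo i \<le> hi i" for i
    using coord_extent_le_cube_radius[of P i] by (simp add: lo_def hi_def)
  define c' where "c' = (\<chi> i. max (lo i) (min (hi i) (c$i)))"
  show "c' \<in> center_box P"
    using lo_hi by (simp add: center_box_def mem_box_cart c'_def lo_def hi_def)
  show "infnorm (c - c') \<le> outer_radius P c - cube_radius P"
    unfolding infnorm_le_iff_cart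
  proof
    fix i
    show "\<bar>(c - c')$i\<bar> \<le> outer_radius P c - cube_radius P"
      using coord_bounds_outer_radius[OF assms, where c = c and i = i] lo_hi[of i]
        cube_radius_le_outer_radius[OF assms, of c]
      by (auto simp: c'_def lo_def hi_def)
  qed
qed

lemma shell_width_le_in_center_box:
  assumes "finite P" "P \<noteq> {}"
  obtains c' where "c' \<in> center_box P" "shell_width P c' \<le> shell_width P c"
proof -
  obtain c' where "c' \<in> center_box P" and near: "infnorm (c - c') \<le> outer_radius P c - cube_radius P"
    using center_box_near[OF assms] .
  moreover have "inner_radius P c - infnorm (c - c') \<le> inner_radius P c'"
    using inner_radius_lipschitz[OF assms, where c = c' and d = c] infnorm_sub[of c c'] by linarith
  ultimately have "shell_width P c' \<le> shell_width P c"
    using outer_radius_center_box[OF assms] unfolding shell_width_def by fastforce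
  then show ?thesis using that \<open>c' \<in> center_box P\<close> by blast
qed

lemma shell_width_minimum_in_center_box:
  assumes "finite P" "P \<noteq> {}"
  obtains c0 where "c0 \<in> center_box P" "\<And>c. shell_width P c0 \<le> shell_width P c"
proof -
  have "compact (center_box P)" "center_box P \<noteq> {}"
    using center_box_near[OF assms] by (auto simp: center_box_def)
  then obtain c0 where c0: "c0 \<in> center_box P"
    and min: "\<forall>c\<in>center_box P. shell_width P c0 \<le> shell_width P c"
    using continuous_attains_inf continuous_on_shell_width[OF assms] by blast
  have "shell_width P c0 \<le> shell_width P c" for c
  proof -
    obtain c' where "c' \<in> center_box P" "shell_width P c' \<le> shell_width P c"
      using shell_width_le_in_center_box[OF assms] .
    then show ?thesis using min by fastforce
  qed
  with c0 show ?thesis by (rule that)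
qed

text \<open>The argument works in every dimension.\<close>

theorem lemma3:
  fixes P :: "(real^'n) set"
  assumes "CARD('n) \<ge> 3"
    and "finite P"
  shows "\<exists>c r r'. min_width_shell P c r r' \<and> c \<in> seh_centers P"
proof (cases "P = {}")
  case True
  then have "min_width_shell P 0 0 0" "smallest_enclosing_hcube P 0 0"
    by (simp_all add: min_width_shell_def smallest_enclosing_hcube_def)
  then show ?thesis by (auto simp: seh_centers_def)
next
  case False
  obtain c0 where c0: "c0 \<in> center_box P" and "\<And>c. shell_width P c0 \<le> shell_width P c"
    using shell_width_minimum_in_center_box[OF assms(2) False] by blast
  with min_width_shell_radii[OF assms(2) False]
  have "min_width_shell P c0 (outer_radius P c0) (inner_radius P c0)" by blast
  moreover have "c0 \<in> seh_centers P"
    using smallest_enclosing_hcube_center_box[OF assms(2) False c0] by (auto simp: seh_centers_def)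
  ultimately show ?thesis by blast
qed

end
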